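(* Let $(G,S,k)$ be an instance of \textsc{Edge Subset Feedback Vertex Set}, let $T=V(S)$, let $X$ be a dominant solution for $(G,S,k)$, and let $x$ be any vertex of $X_0=X\setminus T$. Then there exist $|X|+2$ paths in $G-S$, each starting in $T$ and ending in $X$, that are pairwise vertex-disjoint except for three of the paths, which all end in $x$ (and share only this vertex). Moreover, these paths can be chosen so that every connected component of $G-X-S$ is intersected by at most one of the paths.
   Context: Graphs are finite and undirected and may contain loops and parallel edges (so cycles of length one and two are allowed). An instance of \textsc{Edge Subset Feedback Vertex Set} is $(G,S,k)$ with $G=(V,E)$, $S\subseteq E$, $k\in\mathbb{N}$. An $S$-cycle is a cycle containing at least one edge of $S$. A solution is a set $X\subseteq V$ with $|X|\le k$ such that $G-X$ contains no $S$-cycle. $V(S)$ denotes the set of vertices incident with at least one edge of $S$. $G-S$ denotes $(V,E\setminus S)$ and $G-X-S$ denotes $(G-X)-S$. A solution $X$ is dominant if it has minimum size among all solutions and, among minimum-size solutions, contains the maximum possible number of vertices of $T=V(S)$. Paths may have length zero (a single vertex). *)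

theory Defs
  imports Main
begin

text \<open>Finite multigraphs with loops and parallel edges: vertex set V, edge set E,
  and an incidence map ends assigning to each edge its set of end vertices
  (one vertex for a loop, two for an ordinary edge).\<close>

definition multigraph :: "'v set \<Rightarrow> 'e set \<Rightarrow> ('e \<Rightarrow> 'v set) \<Rightarrow> bool" where
  "multigraph V E ends \<longleftrightarrow> finite V \<and> finite E \<and>
     (\<forall>e\<in>E. ends e \<subseteq> V \<and> 1 \<le> card (ends e) \<and> card (ends e) \<le> 2)"

definition del_verts_E :: "'e set \<Rightarrow> ('e \<Rightarrow> 'v set) \<Rightarrow> 'v set \<Rightarrow> 'e set" where
  "del_verts_E E ends X = {e \<in> E. ends e \<inter> X = {}}"

text \<open>A cycle: vertices v_0..v_{n-1} (distinct), edges e_0..e_{n-1} (distinct),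
  n \<ge> 1, edge e_i joining v_i and v_{i+1 mod n}. Length 1 = loop, length 2 = two parallel edges.\<close>
definition is_cycle :: "'v set \<Rightarrow> 'e set \<Rightarrow> ('e \<Rightarrow> 'v set) \<Rightarrow> 'v list \<Rightarrow> 'e list \<Rightarrow> bool" where
  "is_cycle V E ends vs es \<longleftrightarrow> vs \<noteq> [] \<and> length es = length vs \<and> distinct vs \<and> distinct es \<and>
     set vs \<subseteq> V \<and> set es \<subseteq> E \<and>
     (\<forall>i < length vs. ends (es ! i) = {vs ! i, vs ! ((i + 1) mod length vs)})"

definition is_S_cycle :: "'v set \<Rightarrow> 'e set \<Rightarrow> ('e \<Rightarrow> 'v set) \<Rightarrow> 'e set \<Rightarrow> 'v list \<Rightarrow> 'e list \<Rightarrow> bool" where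
  "is_S_cycle V E ends S vs es \<longleftrightarrow> is_cycle V E ends vs es \<and> set es \<inter> S \<noteq> {}"

definition esfvs_solution :: "'v set \<Rightarrow> 'e set \<Rightarrow> ('e \<Rightarrow> 'v set) \<Rightarrow> 'e set \<Rightarrow> nat \<Rightarrow> 'v set \<Rightarrow> bool" where
  "esfvs_solution V E ends S k X \<longleftrightarrow> X \<subseteq> V \<and> card X \<le> k \<and>
     \<not> (\<exists>vs es. is_S_cycle (V - X) (del_verts_E E ends X) ends S vs es)"

definition verts_of :: "('e \<Rightarrow> 'v set) \<Rightarrow> 'e set \<Rightarrow> 'v set" where
  "verts_of ends S = (\<Union>e\<in>S. ends e)"

definition dominant_solution :: "'v set \<Rightarrow> 'e set \<Rightarrow> ('e \<Rightarrow> 'v set) \<Rightarrow> 'e set \<Rightarrow> nat \<Rightarrow> 'v set \<Rightarrow> bool" where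
  "dominant_solution V E ends S k X \<longleftrightarrow> esfvs_solution V E ends S k X \<and>
     (\<forall>Y. esfvs_solution V E ends S k Y \<longrightarrow> card X \<le> card Y) \<and>
     (\<forall>Y. esfvs_solution V E ends S k Y \<longrightarrow> card Y = card X \<longrightarrow>
          card (Y \<inter> verts_of ends S) \<le> card (X \<inter> verts_of ends S))"

definition is_path :: "'v set \<Rightarrow> 'e set \<Rightarrow> ('e \<Rightarrow> 'v set) \<Rightarrow> 'v list \<Rightarrow> bool" where
  "is_path V E ends p \<longleftrightarrow> p \<noteq> [] \<and> distinct p \<and> set p \<subseteq> V \<and>
     (\<forall>i. Suc i < length p \<longrightarrow> (\<exists>e\<in>E. ends e = {p ! i, p ! Suc i}))"

definition reachable :: "'v set \<Rightarrow> 'e set \<Rightarrow> ('e \<Rightarrow> 'v set) \<Rightarrow> 'v \<Rightarrow> 'v \<Rightarrow> bool" where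
  "reachable V E ends u v \<longleftrightarrow> (\<exists>p. is_path V E ends p \<and> hd p = u \<and> last p = v)"

definition components :: "'v set \<Rightarrow> 'e set \<Rightarrow> ('e \<Rightarrow> 'v set) \<Rightarrow> 'v set set" where
  "components V E ends = {{v \<in> V. reachable V E ends u v} | u. u \<in> V}"

end

theory Submission
  imports Defs
begin

text \<open>
  Every \<open>S\<close>-edge with both ends outside \<open>X\<close> is a bridge of \<open>G - X\<close>, so
  the components of \<open>G - X - S\<close> are strung together by \<open>S\<close>-edges like the nodes of a forest;
  hence any \<open>m\<close> of them can be separated from each other in \<open>G - X\<close> by deleting at most \<open>m - 1\<close>
  vertices of \<open>T\<close>. For \<open>Z \<subseteq> X - T\<close> call a component attached to \<open>Z\<close> if it meets \<open>T\<close> and is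
  joined to \<open>Z\<close> by an edge outside \<open>S\<close>. If \<open>Z \<noteq> {}\<close> had at most \<open>|Z| + 1\<close> attached components,
  replacing \<open>Z\<close> in \<open>X\<close> by a separator of them would again hit every \<open>S\<close>-cycle, with at most
  \<open>|X|\<close> vertices but more of them in \<open>T\<close>, against dominance. So \<open>Z\<close> has at least \<open>|Z| + 2\<close>
  attached components, and Hall's theorem gives pairwise distinct attached components for the
  vertices of \<open>X - T\<close>, three of them for \<open>x\<close>. Inside each chosen component a path runs from \<open>T\<close>
  to a neighbour of its vertex; the vertices of \<open>X \<inter> T\<close> are paths of length zero.
\<close>

section \<open>Walks and \<open>S\<close>-cycles\<close>

definition edge_rel :: "'v set \<Rightarrow> 'e set \<Rightarrow> ('e \<Rightarrow> 'v set) \<Rightarrow> ('v \<times> 'v) set" where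
  "edge_rel Vs F ends = {(a, b). a \<in> Vs \<and> b \<in> Vs \<and> (\<exists>e\<in>F. ends e = {a, b})}"

lemma sym_edge_rel: "sym (edge_rel Vs F ends)"
  by (auto simp: sym_def edge_rel_def insert_commute)

lemma rtrancl_edge_rel_sym:
  "(a, b) \<in> (edge_rel Vs F ends)\<^sup>* \<Longrightarrow> (b, a) \<in> (edge_rel Vs F ends)\<^sup>*"
  using sym_rtrancl[OF sym_edge_rel] by (rule symD)

lemma edge_rel_mono: "Vs \<subseteq> Vs' \<Longrightarrow> F \<subseteq> F' \<Longrightarrow> edge_rel Vs F ends \<subseteq> edge_rel Vs' F' ends"
  by (auto simp: edge_rel_def)

lemma rtrancl_edge_rel_mono:
  "(a, b) \<in> (edge_rel Vs F ends)\<^sup>* \<Longrightarrow> Vs \<subseteq> Vs' \<Longrightarrow> F \<subseteq> F' \<Longrightarrow>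
    (a, b) \<in> (edge_rel Vs' F' ends)\<^sup>*"
  using rtrancl_mono[OF edge_rel_mono] by blast

lemma rtrancl_edge_rel_in:
  "(a, b) \<in> (edge_rel Vs F ends)\<^sup>* \<Longrightarrow> a = b \<or> a \<in> Vs \<and> b \<in> Vs"
  by (induction rule: rtrancl_induct) (auto simp: edge_rel_def)

lemma edge_rel_del_verts:
  "edge_rel (V - Y) (del_verts_E F ends Y) ends = edge_rel (V - Y) F ends"
  by (auto simp: edge_rel_def del_verts_E_def)

lemma rtrancl_edge_rel_first_entry:
  assumes "(a, b) \<in> (edge_rel Vs F ends)\<^sup>*" "a \<notin> D"
  obtains "(a, b) \<in> (edge_rel (Vs - D) F ends)\<^sup>*"
  | w w' where "(a, w) \<in> (edge_rel (Vs - D) F ends)\<^sup>*" "w \<notin> D"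
      "(w, w') \<in> edge_rel Vs F ends" "w' \<in> D" "(w', b) \<in> (edge_rel Vs F ends)\<^sup>*"
proof -
  have "(a, b) \<in> (edge_rel (Vs - D) F ends)\<^sup>* \<or>
    (\<exists>w w'. (a, w) \<in> (edge_rel (Vs - D) F ends)\<^sup>* \<and> w \<notin> D \<and>
       (w, w') \<in> edge_rel Vs F ends \<and> w' \<in> D \<and> (w', b) \<in> (edge_rel Vs F ends)\<^sup>*)"
    using assms(1)
  proof (induction rule: rtrancl_induct)
    case (step y z)
    show ?case
    proof (cases "(a, y) \<in> (edge_rel (Vs - D) F ends)\<^sup>*")
      case True
      moreover have "y \<notin> D" using True assms(2) rtrancl_edge_rel_in by fastforce
      ultimately show ?thesis
        using step.hyps(2) rtrancl_into_rtrancl[OF True, of z]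
        by (cases "z \<in> D") (auto simp: edge_rel_def)
    next
      case False
      with step.IH step.hyps(2) show ?thesis by (meson rtrancl.rtrancl_into_rtrancl)
    qed
  qed simp
  with that show thesis by blast
qed

lemma rtrancl_edge_rel_last_exit:
  assumes "(a, b) \<in> (edge_rel Vs F ends)\<^sup>*" "a \<in> D" "b \<notin> D"
  obtains w w' where "w \<in> D" "(w, w') \<in> edge_rel Vs F ends" "w' \<notin> D"
    "(w', b) \<in> (edge_rel (Vs - D) F ends)\<^sup>*"
  using rtrancl_edge_rel_sym[OF assms(1)] assms(3)
proof (cases rule: rtrancl_edge_rel_first_entry)
  case 1
  then show ?thesis using assms(2,3) rtrancl_edge_rel_in by fastforce
next
  case (2 w w')
  then show ?thesis
    using that[of w' w] sym_edge_rel rtrancl_edge_rel_sym by (metis symD)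
qed

lemma path_take:
  "is_path Vs F ends p \<Longrightarrow> j < length p \<Longrightarrow> is_path Vs F ends (take (Suc j) p)"
  by (auto simp: is_path_def dest: in_set_takeD)

lemma path_snoc:
  assumes p: "is_path Vs F ends p" and v: "v \<notin> set p" "v \<in> Vs"
    and e: "\<exists>e\<in>F. ends e = {last p, v}"
  shows "is_path Vs F ends (p @ [v])"
  unfolding is_path_def
proof (intro conjI allI impI)
  show "p @ [v] \<noteq> []" "distinct (p @ [v])" "set (p @ [v]) \<subseteq> Vs"
    using p v by (auto simp: is_path_def)
  fix i assume i: "Suc i < length (p @ [v])"
  show "\<exists>e\<in>F. ends e = {(p @ [v]) ! i, (p @ [v]) ! Suc i}"
  proof (cases "Suc i < length p")
    case True then show ?thesis using p by (simp add: nth_append is_path_def)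
  next
    case False
    then have "i = length p - 1" "p \<noteq> []" using i p by (auto simp: is_path_def)
    then show ?thesis using e by (auto simp: nth_append last_conv_nth)
  qed
qed

lemma path_mono_verts: "is_path Vs F ends p \<Longrightarrow> Vs \<subseteq> Vs' \<Longrightarrow> is_path Vs' F ends p"
  by (auto simp: is_path_def)

lemma path_nth_rtrancl:
  assumes "is_path Vs F ends p" "i < length p"
  shows "(hd p, p ! i) \<in> (edge_rel Vs F ends)\<^sup>*"
  using assms(2)
proof (induction i)
  case 0
  then show ?case using assms(1) by (simp add: hd_conv_nth is_path_def)
next
  case (Suc i)
  then have "(p ! i, p ! Suc i) \<in> edge_rel Vs F ends"
    using assms(1) by (auto simp: is_path_def edge_rel_def)
  with Suc show ?case by (meson Suc_lessD rtrancl.rtrancl_into_rtrancl)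
qed

lemma path_rtrancl:
  "is_path Vs F ends p \<Longrightarrow> v \<in> set p \<Longrightarrow> (hd p, v) \<in> (edge_rel Vs F ends)\<^sup>*"
  by (metis in_set_conv_nth path_nth_rtrancl)

lemma rtrancl_imp_path:
  assumes "(u, v) \<in> (edge_rel Vs F ends)\<^sup>*" "u \<in> Vs"
  shows "\<exists>p. is_path Vs F ends p \<and> hd p = u \<and> last p = v"
  using assms(1)
proof (induction rule: rtrancl_induct)
  case base
  show ?case using assms(2) by (intro exI[of _ "[u]"]) (auto simp: is_path_def)
next
  case (step w v)
  then obtain p where p: "is_path Vs F ends p" "hd p = u" "last p = w" by blast
  show ?case
  proof (cases "v \<in> set p")
    case True
    then obtain j where j: "j < length p" "p ! j = v" by (auto simp: in_set_conv_nth)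
    have "hd (take (Suc j) p) = u" using p by (cases p) simp_all
    moreover have "last (take (Suc j) p) = v" using j by (simp add: take_Suc_conv_app_nth)
    ultimately
    show ?thesis using path_take[OF p(1) j(1)] by blast
  next
    case False
    moreover have "v \<in> Vs" "\<exists>e\<in>F. ends e = {last p, v}"
      using step.hyps(2) p(3) by (auto simp: edge_rel_def)
    ultimately have "is_path Vs F ends (p @ [v])" using path_snoc[OF p(1)] by blast
    moreover have "hd (p @ [v]) = u" using p by (auto simp: is_path_def)
    ultimately show ?thesis by (intro exI[of _ "p @ [v]"]) simp
  qed
qed

lemma reachable_iff_rtrancl:
  "reachable Vs F ends u v \<longleftrightarrow> u \<in> Vs \<and> (u, v) \<in> (edge_rel Vs F ends)\<^sup>*"
proof
  assume "reachable Vs F ends u v"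
  then obtain p where p: "is_path Vs F ends p" "hd p = u" "last p = v"
    by (auto simp: reachable_def)
  then have "p \<noteq> []" "set p \<subseteq> Vs" by (auto simp: is_path_def)
  with p show "u \<in> Vs \<and> (u, v) \<in> (edge_rel Vs F ends)\<^sup>*"
    using path_rtrancl by fastforce
qed (auto simp: reachable_def dest: rtrancl_imp_path)

lemma path_edges:
  assumes p: "is_path Vs F ends p"
  obtains es where "length es = length p - 1" "distinct es" "set es \<subseteq> F"
    "\<forall>i < length es. ends (es ! i) = {p ! i, p ! Suc i}"
proof -
  have "\<forall>i. \<exists>e. Suc i < length p \<longrightarrow> e \<in> F \<and> ends e = {p ! i, p ! Suc i}"
    using p by (auto simp: is_path_def)
  then obtain f where f: "\<And>i. Suc i < length p \<Longrightarrow> f i \<in> F \<and> ends (f i) = {p ! i, p ! Suc i}"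
    by metis
  have "inj_on f {0..<length p - 1}"
  proof (rule inj_onI)
    fix i j assume i: "i \<in> {0..<length p - 1}" and j: "j \<in> {0..<length p - 1}" and "f i = f j"
    then have "{p ! i, p ! Suc i} = {p ! j, p ! Suc j}" using f[of i] f[of j] by auto
    moreover have "distinct p" using p by (simp add: is_path_def)
    ultimately show "i = j" using i j by (auto simp: doubleton_eq_iff nth_eq_iff_index_eq)
  qed
  then show thesis using f by (intro that[of "map f [0..<length p - 1]"]) (auto simp: distinct_map)
qed

lemma S_cycle_close_path:
  assumes p: "is_path Vs (F - {e}) ends p" and e: "e \<in> F \<inter> S" "ends e = {last p, hd p}"
    and len: "2 \<le> length p"
  shows "\<exists>es. is_S_cycle Vs F ends S p es"
proof -
  obtain es where es: "length es = length p - 1" "distinct es" "set es \<subseteq> F - {e}"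
      "\<forall>i < length es. ends (es ! i) = {p ! i, p ! Suc i}"
    using path_edges[OF p] by blast
  have "is_cycle Vs F ends p (es @ [e])"
    unfolding is_cycle_def
  proof (intro conjI allI impI)
    show "p \<noteq> []" "distinct p" "set p \<subseteq> Vs" using p by (auto simp: is_path_def)
    show "length (es @ [e]) = length p" "distinct (es @ [e])" "set (es @ [e]) \<subseteq> F"
      using es e len by auto
  next
    fix i assume i: "i < length p"
    show "ends ((es @ [e]) ! i) = {p ! i, p ! ((i + 1) mod length p)}"
    proof (cases "i < length es")
      case True
      then show ?thesis using es(1,4) by (simp add: nth_append)
    next
      case False
      then have i_last: "i = length p - 1" using i es(1) by simp
      with len have "i + 1 = length p" "p \<noteq> []" by auto
      then have "(i + 1) mod length p = 0" "p \<noteq> []" by simp_all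
      with i_last show ?thesis using e(2) es(1)
        by (simp add: nth_append last_conv_nth hd_conv_nth)
    qed
  qed
  then show ?thesis using e(1) by (auto simp: is_S_cycle_def)
qed

lemma cycle_segment:
  assumes c: "is_cycle Vs F ends vs es" and "j \<le> m" "m < length vs"
  shows "(vs ! j, vs ! m) \<in> (edge_rel Vs ((!) es ` {j..<m}) ends)\<^sup>*"
  using assms(2,3)
proof (induction m)
  case (Suc m)
  show ?case
  proof (cases "j = Suc m")
    case False
    then have "(vs ! j, vs ! m) \<in> (edge_rel Vs ((!) es ` {j..<Suc m}) ends)\<^sup>*"
      using Suc by (auto elim: rtrancl_edge_rel_mono)
    moreover have "(vs ! m, vs ! Suc m) \<in> edge_rel Vs ((!) es ` {j..<Suc m}) ends"
      using c Suc.prems False unfolding is_cycle_def edge_rel_def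
      by (auto simp: image_iff intro!: bexI[of _ m])
    ultimately show ?thesis by simp
  qed simp
qed simp

lemma cycle_edge_ends_rtrancl:
  assumes c: "is_cycle Vs F ends vs es" and i: "i < length vs"
  shows "(vs ! ((i + 1) mod length vs), vs ! i) \<in> (edge_rel Vs (F - {es ! i}) ends)\<^sup>*"
proof -
  let ?n = "length vs"
  from c have len: "length es = ?n" and dist: "distinct es"
    and sub: "set vs \<subseteq> Vs" "set es \<subseteq> F" by (auto simp: is_cycle_def)
  have avoid: "(!) es ` A \<subseteq> F - {es ! i}" if "A \<subseteq> {..<?n} - {i}" for A
  proof
    fix e assume "e \<in> (!) es ` A"
    then obtain l where l: "l \<in> A" "e = es ! l" by blast
    then have "l < length es" "l \<noteq> i" using that len by auto
    then show "e \<in> F - {es ! i}"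
      using l i len dist sub(2) nth_mem[of l es] by (auto simp: nth_eq_iff_index_eq)
  qed
  have seg: "(vs ! j, vs ! m) \<in> (edge_rel Vs (F - {es ! i}) ends)\<^sup>*"
    if "j \<le> m" "m < ?n" "i \<notin> {j..<m}" for j m
  proof -
    have "{j..<m} \<subseteq> {..<?n} - {i}" using that by auto
    then show ?thesis
      using rtrancl_edge_rel_mono[OF cycle_segment[OF c that(1,2)] subset_refl avoid] by blast
  qed
  show ?thesis
  proof (cases "i + 1 < ?n")
    case True
    have "(vs ! (i + 1), vs ! (?n - 1)) \<in> (edge_rel Vs (F - {es ! i}) ends)\<^sup>*"
      using seg True by simp
    moreover have "(vs ! (?n - 1), vs ! 0) \<in> edge_rel Vs (F - {es ! i}) ends"
      using c True avoid[of "{?n - 1}"] sub(1) len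
      by (auto simp: is_cycle_def edge_rel_def insert_commute intro!: bexI[of _ "es ! (?n - 1)"])
    moreover have "(vs ! 0, vs ! i) \<in> (edge_rel Vs (F - {es ! i}) ends)\<^sup>*"
      using seg i by simp
    ultimately show ?thesis using True by (simp add: rtrancl_trans)
  next
    case False
    then have "i + 1 = ?n" using i by simp
    then have "(i + 1) mod ?n = 0" by simp
    then show ?thesis using seg[of 0 i] i by simp
  qed
qed

lemma S_cycle_if_S_edge_rtrancl:
  assumes e: "e \<in> F \<inter> S" "ends e = {u, v}" "u \<in> Vs" "v \<in> Vs"
    and uv: "(u, v) \<in> (edge_rel Vs (F - {e}) ends)\<^sup>*"
  shows "\<exists>vs es. is_S_cycle Vs F ends S vs es"
proof (cases "u = v")
  case True
  then have "is_S_cycle Vs F ends S [u] [e]" using e by (auto simp: is_S_cycle_def is_cycle_def)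
  then show ?thesis by blast
next
  case False
  obtain p where p: "is_path Vs (F - {e}) ends p" "hd p = u" "last p = v"
    using rtrancl_imp_path[OF uv e(3)] by blast
  have "2 \<le> length p"
    using p False by (cases p rule: remdups_adj.cases) (auto simp: is_path_def)
  moreover have "ends e = {last p, hd p}" using e(2) p by (simp add: insert_commute)
  ultimately show ?thesis using S_cycle_close_path[OF p(1) e(1)] by blast
qed

text \<open>A loop is the case \<open>u = v\<close>.\<close>

lemma ex_S_cycle_iff:
  "(\<exists>vs es. is_S_cycle Vs F ends S vs es) \<longleftrightarrow>
    (\<exists>e\<in>F \<inter> S. \<exists>u v. ends e = {u, v} \<and> u \<in> Vs \<and> v \<in> Vs \<and>
       (u, v) \<in> (edge_rel Vs (F - {e}) ends)\<^sup>*)"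
proof
  assume "\<exists>vs es. is_S_cycle Vs F ends S vs es"
  then obtain vs es where c: "is_cycle Vs F ends vs es" and "set es \<inter> S \<noteq> {}"
    by (auto simp: is_S_cycle_def)
  moreover have "length es = length vs" using c by (simp add: is_cycle_def)
  ultimately obtain i where i: "i < length vs" "es ! i \<in> S" by (metis disjoint_iff in_set_conv_nth)
  let ?u = "vs ! i" and ?v = "vs ! ((i + 1) mod length vs)"
  have "ends (es ! i) = {?u, ?v}" "?u \<in> Vs" "?v \<in> Vs" "es ! i \<in> F"
    using c i by (auto simp: is_cycle_def)
  with rtrancl_edge_rel_sym[OF cycle_edge_ends_rtrancl[OF c i(1)]] i(2)
  show "\<exists>e\<in>F \<inter> S. \<exists>u v. ends e = {u, v} \<and> u \<in> Vs \<and> v \<in> Vs \<and>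
      (u, v) \<in> (edge_rel Vs (F - {e}) ends)\<^sup>*"
    by blast
qed (elim bexE exE conjE, rule S_cycle_if_S_edge_rtrancl)

lemma ex_S_cycle_del_verts_iff:
  "(\<exists>vs es. is_S_cycle (V - Y) (del_verts_E E ends Y) ends S vs es) \<longleftrightarrow>
    (\<exists>e\<in>E \<inter> S. \<exists>u v. ends e = {u, v} \<and> u \<in> V - Y \<and> v \<in> V - Y \<and>
       (u, v) \<in> (edge_rel (V - Y) (E - {e}) ends)\<^sup>*)"
proof -
  have del: "del_verts_E E ends Y - {e} = del_verts_E (E - {e}) ends Y" for e
    by (auto simp: del_verts_E_def)
  have mem: "e \<in> del_verts_E E ends Y \<longleftrightarrow> e \<in> E"
    if "ends e = {u, v}" "u \<in> V - Y" "v \<in> V - Y" for e u v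
    using that by (auto simp: del_verts_E_def)
  show ?thesis
    unfolding ex_S_cycle_iff del edge_rel_del_verts using mem by (metis IntE IntI)
qed

section \<open>Hall's marriage theorem\<close>

lemma hall_condition_remove:
  assumes surplus: "\<forall>J. J \<subseteq> I \<and> J \<noteq> {} \<and> J \<noteq> I \<longrightarrow> card J < card (\<Union>(A ` J))"
    and i0: "i0 \<in> I"
  shows "\<forall>J\<subseteq>I - {i0}. card J \<le> card (\<Union>((\<lambda>i. A i - {a}) ` J))"
proof (intro allI impI)
  fix J assume J: "J \<subseteq> I - {i0}"
  show "card J \<le> card (\<Union>((\<lambda>i. A i - {a}) ` J))"
  proof (cases "J = {}")
    case False
    with J i0 surplus have "card J < card (\<Union>(A ` J))" by blast
    moreover have "\<Union>((\<lambda>i. A i - {a}) ` J) = \<Union>(A ` J) - {a}" by blast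
    moreover have "card (\<Union>(A ` J)) - card {a} \<le> card (\<Union>(A ` J) - {a})"
      by (rule diff_card_le_card_Diff) simp
    ultimately show ?thesis by simp
  qed simp
qed

lemma hall_condition_contract:
  assumes hall: "\<forall>J\<subseteq>I. card J \<le> card (\<Union>(A ` J))"
    and fin: "finite I" "\<forall>i\<in>I. finite (A i)"
    and J: "J \<subseteq> I" "card (\<Union>(A ` J)) \<le> card J"
  shows "\<forall>K\<subseteq>I - J. card K \<le> card (\<Union>((\<lambda>i. A i - \<Union>(A ` J)) ` K))"
proof (intro allI impI)
  fix K assume K: "K \<subseteq> I - J"
  let ?U = "\<Union>(A ` J)" and ?U' = "\<Union>((\<lambda>i. A i - \<Union>(A ` J)) ` K)"
  have KJ: "K \<union> J \<subseteq> I" using K J(1) by blast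
  then have fin_KJ: "finite (K \<union> J)" using fin(1) by (rule finite_subset)
  have "finite (\<Union>(A ` (K \<union> J)))"
    using fin_KJ KJ fin(2) by (intro finite_UN_I) auto
  then have fin_U: "finite ?U" "finite ?U'" by (auto intro: rev_finite_subset)
  have "card K + card J = card (K \<union> J)"
    using K fin_KJ by (subst card_Un_disjoint) auto
  also have "\<dots> \<le> card (\<Union>(A ` (K \<union> J)))" using hall KJ by blast
  also have "\<Union>(A ` (K \<union> J)) = ?U' \<union> ?U" by blast
  also have "card (?U' \<union> ?U) = card ?U' + card ?U" by (rule card_Un_disjoint[OF fin_U(2,1)]) blast
  finally show "card K \<le> card ?U'" using J(2) by linarith
qed

lemma system_of_representatives_fun_upd:
  assumes "\<forall>i\<in>I - {i0}. f i \<in> A i - {a}" "inj_on f (I - {i0})" "a \<in> A i0"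
  shows "(\<forall>i\<in>I. (f(i0 := a)) i \<in> A i) \<and> inj_on (f(i0 := a)) I"
proof
  show "\<forall>i\<in>I. (f(i0 := a)) i \<in> A i" using assms(1,3) by auto
  show "inj_on (f(i0 := a)) I"
  proof (rule inj_onI)
    fix i j assume "i \<in> I" "j \<in> I" "(f(i0 := a)) i = (f(i0 := a)) j"
    then show "i = j" using assms(1,2) by (cases "i = i0"; cases "j = i0") (auto simp: inj_on_def)
  qed
qed

lemma system_of_representatives_if:
  assumes J: "J \<subseteq> I" and f1: "\<forall>i\<in>J. f1 i \<in> A i" "inj_on f1 J"
    and f2: "\<forall>i\<in>I - J. f2 i \<in> A i - \<Union>(A ` J)" "inj_on f2 (I - J)"
  shows "(\<forall>i\<in>I. (if i \<in> J then f1 i else f2 i) \<in> A i) \<and>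
    inj_on (\<lambda>i. if i \<in> J then f1 i else f2 i) I"
proof
  show "\<forall>i\<in>I. (if i \<in> J then f1 i else f2 i) \<in> A i" using f1(1) f2(1) by simp
  have "f1 ` J \<subseteq> \<Union>(A ` J)" using f1(1) by blast
  moreover have "f2 ` (I - J) \<inter> \<Union>(A ` J) = {}" using f2(1) by blast
  ultimately have "f1 ` J \<inter> f2 ` (I - J) = {}" by blast
  then have "inj_on (\<lambda>i. if i \<in> J then f1 i else f2 i) (J \<union> (I - J))"
    by (rule inj_on_disjoint_Un[OF f1(2) f2(2)])
  then show "inj_on (\<lambda>i. if i \<in> J then f1 i else f2 i) I" using J by (simp add: Un_absorb1)
qed

text \<open>Induction on \<open>|I|\<close>: if every proper nonempty subfamily has surplus, any choice for one
  index can be fixed; otherwise a critical subfamily and the rest are matched separately.\<close>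

theorem hall_marriage:
  fixes A :: "'i \<Rightarrow> 'a set"
  assumes "finite I" "\<forall>i\<in>I. finite (A i)" "\<forall>J\<subseteq>I. card J \<le> card (\<Union>(A ` J))"
  shows "\<exists>f. (\<forall>i\<in>I. f i \<in> A i) \<and> inj_on f I"
  using assms
proof (induction "card I" arbitrary: I A rule: less_induct)
  case less
  note fin = less.prems(1,2) and hall = less.prems(3)
  show ?case
  proof (cases "\<forall>J. J \<subseteq> I \<and> J \<noteq> {} \<and> J \<noteq> I \<longrightarrow> card J < card (\<Union>(A ` J))")
    case surplus: True
    show ?thesis
    proof (cases "I = {}")
      case False
      then obtain i0 where i0: "i0 \<in> I" by blast
      have "card {i0} \<le> card (\<Union>(A ` {i0}))" using hall[rule_format, of "{i0}"] i0 by simp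
      then obtain a where a: "a \<in> A i0" by fastforce
      have "card (I - {i0}) < card I" using card_Diff1_less[OF fin(1) i0] .
      moreover have "finite (I - {i0})" "\<forall>i\<in>I - {i0}. finite (A i - {a})" using fin by auto
      ultimately obtain f where "\<forall>i\<in>I - {i0}. f i \<in> A i - {a}" "inj_on f (I - {i0})"
        using less.hyps[of "I - {i0}" "\<lambda>i. A i - {a}"] hall_condition_remove[OF surplus i0]
        by blast
      then show ?thesis using system_of_representatives_fun_upd a by (metis (no_types))
    qed simp
  next
    case False
    then obtain J where J: "J \<subseteq> I" "J \<noteq> {}" "J \<noteq> I" "\<not> card J < card (\<Union>(A ` J))"
      by blast
    then have crit: "card (\<Union>(A ` J)) \<le> card J" by simp
    let ?U = "\<Union>(A ` J)"
    have fin_J: "finite J" using J(1) fin(1) by (rule finite_subset)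
    have "card J < card I" using J(1,3) fin(1) by (simp add: psubset_card_mono)
    moreover have "\<forall>i\<in>J. finite (A i)" "\<forall>K\<subseteq>J. card K \<le> card (\<Union>(A ` K))"
      using fin(2) hall J(1) by auto
    ultimately obtain f1 where f1: "\<forall>i\<in>J. f1 i \<in> A i" "inj_on f1 J"
      using less.hyps[of J A] fin_J by blast
    have "0 < card J" using fin_J J(2) by (simp add: card_gt_0_iff)
    moreover have "card J \<le> card I" using J(1) fin(1) by (simp add: card_mono)
    ultimately have "card (I - J) < card I" using card_Diff_subset[OF fin_J J(1)] by linarith
    moreover have "finite (I - J)" "\<forall>i\<in>I - J. finite (A i - ?U)" using fin by auto
    ultimately obtain f2 where "\<forall>i\<in>I - J. f2 i \<in> A i - ?U" "inj_on f2 (I - J)"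
      using less.hyps[of "I - J" "\<lambda>i. A i - ?U"] hall_condition_contract[OF hall fin J(1) crit]
      by blast
    then have "(\<forall>i\<in>I. (if i \<in> J then f1 i else f2 i) \<in> A i) \<and>
      inj_on (\<lambda>i. if i \<in> J then f1 i else f2 i) I"
      by (intro system_of_representatives_if[OF J(1) f1])
    then show ?thesis by (rule exI[where x = "\<lambda>i. if i \<in> J then f1 i else f2 i"])
  qed
qed

lemma card_le_card_image_add_2:
  fixes f :: "nat \<Rightarrow> 'a"
  assumes "finite J" and f: "\<forall>i\<in>J. \<forall>j\<in>J. i \<noteq> j \<and> (3 \<le> i \<or> 3 \<le> j) \<longrightarrow> f i \<noteq> f j"
  shows "card J \<le> card (f ` J) + 2"
proof -
  have "inj_on f (J - {0, 1})"
  proof (rule inj_onI)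
    fix i j assume i: "i \<in> J - {0, 1}" and j: "j \<in> J - {0, 1}" and eq: "f i = f j"
    show "i = j"
    proof (rule ccontr)
      assume "i \<noteq> j"
      moreover have "2 \<le> i" "2 \<le> j" using i j by auto
      ultimately have "3 \<le> i \<or> 3 \<le> j" by linarith
      with \<open>i \<noteq> j\<close> f i j eq show False by blast
    qed
  qed
  then have "card (J - {0, 1}) = card (f ` (J - {0, 1}))" by (rule card_image[symmetric])
  also have "\<dots> \<le> card (f ` J)" using assms(1) by (intro card_mono) auto
  finally have "card (J - {0, 1}) \<le> card (f ` J)" .
  moreover have "card J - card {0, 1 :: nat} \<le> card (J - {0, 1})"
    by (rule diff_card_le_card_Diff) simp
  ultimately show ?thesis by simp
qed

lemma triple_numbering:
  assumes "finite X" "x \<in> X"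
  obtains ow :: "nat \<Rightarrow> 'a" where "\<forall>i<card X + 2. ow i \<in> X" "\<forall>i<3. ow i = x"
    "\<forall>i<card X + 2. \<forall>j<card X + 2. i \<noteq> j \<and> (3 \<le> i \<or> 3 \<le> j) \<longrightarrow> ow i \<noteq> ow j"
proof -
  obtain xs where xs: "set xs = X - {x}" "distinct xs"
    using finite_distinct_list[of "X - {x}"] assms(1) by blast
  have "card X = Suc (card (X - {x}))" using assms by (rule card_Suc_Diff1[symmetric])
  then have len: "card X + 2 = length xs + 3" using distinct_card[OF xs(2)] xs(1) by simp
  define ow where "ow i = (if i < 3 then x else xs ! (i - 3))" for i
  have ow_xs: "ow i \<in> set xs" if "3 \<le> i" "i < card X + 2" for i
    using that len by (simp add: ow_def)
  have "ow i \<in> X" if "i < card X + 2" for i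
    using ow_xs[OF _ that] xs(1) assms(2) by (cases "3 \<le> i") (auto simp: ow_def)
  moreover have "ow i \<noteq> ow j"
    if "i < card X + 2" "j < card X + 2" "i \<noteq> j" "3 \<le> i \<or> 3 \<le> j" for i j
  proof (cases "3 \<le> i \<and> 3 \<le> j")
    case True
    then have "i - 3 < length xs" "j - 3 < length xs" "i - 3 \<noteq> j - 3" using that len by auto
    then show ?thesis using True nth_eq_iff_index_eq[OF xs(2)] by (simp add: ow_def)
  next
    case False
    then show ?thesis using that ow_xs xs(1) by (auto simp: ow_def)
  qed
  ultimately show thesis by (intro that) (auto simp: ow_def)
qed

section \<open>Components of \<open>G - X - S\<close> and their separation\<close>

locale S_cycle_hitting =
  fixes V :: "'v set" and E :: "'e set" and ends :: "'e \<Rightarrow> 'v set" and S :: "'e set"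
    and X :: "'v set"
  assumes multigraph: "multigraph V E ends" and X_subset: "X \<subseteq> V"
    and no_S_cycle: "\<not> (\<exists>vs es. is_S_cycle (V - X) (del_verts_E E ends X) ends S vs es)"
begin

abbreviation T :: "'v set" where "T \<equiv> verts_of ends S"

lemma finite_V: "finite V"
  using multigraph by (simp add: multigraph_def)

lemma S_edge_bridge:
  assumes "e \<in> E \<inter> S" "ends e = {u, v}" "u \<in> V - X" "v \<in> V - X"
  shows "(u, v) \<notin> (edge_rel (V - X) (E - {e}) ends)\<^sup>*"
  using no_S_cycle assms unfolding ex_S_cycle_del_verts_iff by blast

definition comp :: "'v \<Rightarrow> 'v set" where
  "comp u = {v. (u, v) \<in> (edge_rel (V - X) (E - S) ends)\<^sup>*}"

lemma comp_self: "u \<in> comp u"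
  by (simp add: comp_def)

lemma comp_subset: "u \<in> V - X \<Longrightarrow> comp u \<subseteq> V - X"
  by (auto simp: comp_def dest: rtrancl_edge_rel_in)

lemma comp_rtrancl:
  assumes "a \<in> comp u" "b \<in> comp u"
  shows "(a, b) \<in> (edge_rel (V - X) (E - S) ends)\<^sup>*"
proof -
  have "(a, u) \<in> (edge_rel (V - X) (E - S) ends)\<^sup>*"
    using assms(1) by (simp add: comp_def rtrancl_edge_rel_sym)
  moreover have "(u, b) \<in> (edge_rel (V - X) (E - S) ends)\<^sup>*" using assms(2) by (simp add: comp_def)
  ultimately show ?thesis by (rule rtrancl_trans)
qed

lemma comp_eq: "v \<in> comp u \<Longrightarrow> comp v = comp u"
  using comp_rtrancl[OF _ comp_self] comp_rtrancl[OF comp_self] unfolding comp_def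
  by (blast intro: rtrancl_trans)

lemma comp_disjoint: "comp u \<noteq> comp w \<Longrightarrow> comp u \<inter> comp w = {}"
  using comp_eq by blast

lemma components_eq_comp:
  "components (V - X) (del_verts_E (E - S) ends X) ends = comp ` (V - X)"
proof -
  have "{v \<in> V - X. reachable (V - X) (del_verts_E (E - S) ends X) ends u v} = comp u"
    if "u \<in> V - X" for u
    using that comp_subset unfolding reachable_iff_rtrancl edge_rel_del_verts by (auto simp: comp_def)
  then show ?thesis unfolding components_def by auto
qed

lemma rtrancl_comp_avoiding:
  assumes "b \<in> comp a" "comp a \<inter> R = {}"
  shows "(a, b) \<in> (edge_rel (V - X - R) (E - S) ends)\<^sup>*"
proof -
  from assms(1) have "(a, b) \<in> (edge_rel (V - X) (E - S) ends)\<^sup>*" by (simp add: comp_def)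
  then show ?thesis
  proof (induction rule: rtrancl_induct)
    case (step y z)
    then have "y \<in> comp a" "z \<in> comp a" by (auto simp: comp_def)
    with step assms(2) show ?case
      by (auto simp: edge_rel_def intro: rtrancl_into_rtrancl)
  qed simp
qed

lemma comp_exit_S_edge:
  assumes ab: "(a, b) \<in> (edge_rel Vs E ends)\<^sup>*" and Vs: "Vs \<subseteq> V - X" and b: "b \<notin> comp a"
  obtains w w' f where "w \<in> comp a \<inter> T" "f \<in> E \<inter> S" "ends f = {w, w'}" "w' \<in> Vs - comp a"
    "(w', b) \<in> (edge_rel (Vs - comp a) E ends)\<^sup>*"
proof -
  obtain w w' where ww': "w \<in> comp a" "(w, w') \<in> edge_rel Vs E ends" "w' \<notin> comp a"
      "(w', b) \<in> (edge_rel (Vs - comp a) E ends)\<^sup>*"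
    using rtrancl_edge_rel_last_exit[OF ab comp_self b] by blast
  then obtain f where f: "f \<in> E" "ends f = {w, w'}" "w \<in> Vs" "w' \<in> Vs"
    by (auto simp: edge_rel_def)
  have "f \<in> S"
  proof (rule ccontr)
    assume "f \<notin> S"
    then have "(w, w') \<in> edge_rel (V - X) (E - S) ends" using f Vs by (auto simp: edge_rel_def)
    then have "w' \<in> comp w" by (simp add: comp_def r_into_rtrancl)
    then show False using comp_eq[OF ww'(1)] ww'(3) by simp
  qed
  moreover from this have "w \<in> T" using f(2) by (auto simp: verts_of_def)
  ultimately show thesis using that ww' f by blast
qed

lemma comp_meets_T:
  assumes "(a, b) \<in> (edge_rel (V - X) E ends)\<^sup>*" "(a, b) \<notin> (edge_rel (V - X) (E - S) ends)\<^sup>*"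
  shows "comp a \<inter> T \<noteq> {}"
proof -
  have "b \<notin> comp a" using assms(2) by (simp add: comp_def)
  then obtain w where "w \<in> comp a \<inter> T" by (rule comp_exit_S_edge[OF assms(1) subset_refl])
  then show ?thesis by blast
qed

text \<open>Otherwise the walk \<open>w' \<leadsto> b \<leadsto> b' \<leadsto> a \<leadsto> w\<close> would avoid \<open>f\<close>, which is a
  bridge of \<open>G - X\<close>.\<close>

lemma S_edge_cuts_comp:
  assumes D: "D \<in> comp ` (V - X)" and K: "K \<in> comp ` (V - X)"
    and f: "f \<in> E \<inter> S" "ends f = {w, w'}" "w \<in> D" "w' \<in> V - X - D"
    and w'b: "b \<in> K" "(w', b) \<in> (edge_rel (V - X - D) E ends)\<^sup>*"
    and a: "a \<in> D" "b' \<in> K"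
  shows "(a, b') \<notin> (edge_rel (V - X - {w}) E ends)\<^sup>*"
proof
  assume ab': "(a, b') \<in> (edge_rel (V - X - {w}) E ends)\<^sup>*"
  let ?H = "edge_rel (V - X) (E - {f}) ends"
  have "E - S \<subseteq> E - {f}" using f(1) by blast
  then have XS: "(y, z) \<in> ?H\<^sup>*" if "y \<in> comp u" "z \<in> comp u" for y z u
    using rtrancl_edge_rel_mono[OF comp_rtrancl[OF that] subset_refl] by blast
  have avoid_w: "edge_rel Vs E ends \<subseteq> ?H" if "Vs \<subseteq> V - X" "w \<notin> Vs" for Vs
  proof
    fix p assume "p \<in> edge_rel Vs E ends"
    then obtain y z e where p: "p = (y, z)" "y \<in> Vs" "z \<in> Vs" "e \<in> E" "ends e = {y, z}"
      by (auto simp: edge_rel_def)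
    then have "e \<noteq> f" using f(2) that(2) by auto
    with p that(1) show "p \<in> ?H" by (auto simp: edge_rel_def)
  qed
  have "edge_rel (V - X - D) E ends \<subseteq> ?H" "edge_rel (V - X - {w}) E ends \<subseteq> ?H"
    by (rule avoid_w; use f(3) in blast)+
  then have "(w', b) \<in> ?H\<^sup>*" "(b', a) \<in> ?H\<^sup>*"
    using rtrancl_mono w'b(2) rtrancl_edge_rel_sym[OF ab'] by blast+
  moreover have "(b, b') \<in> ?H\<^sup>*" using K w'b(1) a(2) XS by blast
  moreover have "(a, w) \<in> ?H\<^sup>*" using D a(1) f(3) XS by blast
  ultimately have "(w', w) \<in> ?H\<^sup>*" by (meson rtrancl_trans)
  moreover have "w \<in> V - X" "w' \<in> V - X" using D f(3,4) comp_subset by blast+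
  ultimately show False using S_edge_bridge[OF f(1,2)] rtrancl_edge_rel_sym by metis
qed

definition separated :: "'v set \<Rightarrow> 'v set \<Rightarrow> 'v set \<Rightarrow> bool" where
  "separated R K K' \<longleftrightarrow> (\<forall>a\<in>K. \<forall>b\<in>K'. (a, b) \<notin> (edge_rel (V - X - R) E ends)\<^sup>*)"

lemma separated_mono:
  assumes "separated R K K'" "R \<subseteq> R'"
  shows "separated R' K K'"
proof -
  have "edge_rel (V - X - R') E ends \<subseteq> edge_rel (V - X - R) E ends"
    using assms(2) by (auto simp: edge_rel_def)
  with assms(1) show ?thesis unfolding separated_def using rtrancl_mono by blast
qed

lemma separated_commute: "separated R K K' \<longleftrightarrow> separated R K' K"
  unfolding separated_def by (blast dest: rtrancl_edge_rel_sym)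

lemma Union_comp_subset: "M \<subseteq> comp ` (V - X) \<Longrightarrow> \<Union>M \<subseteq> V - X"
  using comp_subset by blast

lemma separator_insert:
  assumes M: "M \<subseteq> comp ` (V - X)" and D: "D \<in> comp ` (V - X)" "D \<notin> M"
    and R: "R \<subseteq> \<Union>M" "pairwise (separated R) M"
    and K1: "K1 \<in> M" "\<not> separated R D K1"
  obtains w where "w \<in> D \<inter> T" "\<forall>K\<in>M. separated (insert w R) D K"
proof -
  obtain a b where ab: "a \<in> D" "b \<in> K1" "(a, b) \<in> (edge_rel (V - X - R) E ends)\<^sup>*"
    using K1(2) unfolding separated_def by blast
  have D_a: "D = comp a" using D(1) ab(1) comp_eq by auto
  have disj: "D \<inter> K = {}" if K: "K \<in> M" for K
  proof -
    obtain u where "K = comp u" using M K by blast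
    moreover have "D \<noteq> K" using D(2) K by blast
    ultimately show ?thesis using D_a comp_disjoint by blast
  qed
  then have DR: "D \<inter> R = {}" using R(1) by blast
  have "b \<notin> comp a" using disj[OF K1(1)] ab(2) D_a by blast
  with ab(3) Diff_subset[of "V - X" R]
  obtain w w' f where w: "w \<in> D \<inter> T" and f: "f \<in> E \<inter> S" "ends f = {w, w'}"
      and w': "w' \<in> V - X - R - D" "(w', b) \<in> (edge_rel (V - X - R - D) E ends)\<^sup>*"
    unfolding D_a by (rule comp_exit_S_edge)
  have "separated (insert w R) D K" if K: "K \<in> M" for K
  proof (cases "K = K1")
    case True
    have "(w', b) \<in> (edge_rel (V - X - D) E ends)\<^sup>*"
      by (rule rtrancl_edge_rel_mono[OF w'(2)]) auto
    moreover have "K \<in> comp ` (V - X)" "w' \<in> V - X - D" using K M w'(1) by auto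
    ultimately have "separated {w} D K"
      using S_edge_cuts_comp[OF D(1) _ f] w ab(2) True unfolding separated_def by blast
    then show ?thesis by (rule separated_mono) simp
  next
    case False
    show ?thesis unfolding separated_def
    proof (intro ballI notI)
      fix a' b' assume a'b': "a' \<in> D" "b' \<in> K"
        "(a', b') \<in> (edge_rel (V - X - insert w R) E ends)\<^sup>*"
      have "(b, a) \<in> (edge_rel (V - X - R) E ends)\<^sup>*" using ab(3) by (rule rtrancl_edge_rel_sym)
      moreover have "(a, a') \<in> (edge_rel (V - X - R) E ends)\<^sup>*"
      proof -
        have "(a, a') \<in> (edge_rel (V - X - R) (E - S) ends)\<^sup>*"
          using rtrancl_comp_avoiding a'b'(1) DR D_a by simp
        then show ?thesis by (rule rtrancl_edge_rel_mono) auto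
      qed
      moreover have "(a', b') \<in> (edge_rel (V - X - R) E ends)\<^sup>*"
        by (rule rtrancl_edge_rel_mono[OF a'b'(3)]) auto
      ultimately have "(b, b') \<in> (edge_rel (V - X - R) E ends)\<^sup>*" by (meson rtrancl_trans)
      then show False
        using R(2) K1(1) K False ab(2) a'b'(2) unfolding pairwise_def separated_def by blast
    qed
  qed
  with w that show thesis by blast
qed

lemma exists_separator:
  assumes "finite M" "M \<subseteq> comp ` (V - X)"
  shows "\<exists>R. R \<subseteq> T \<inter> \<Union>M \<and> card R \<le> card M - 1 \<and> pairwise (separated R) M"
  using assms
proof (induction M rule: finite_induct)
  case empty
  show ?case by (intro exI[of _ "{}"]) simp
next
  case (insert D M)
  from insert.prems have D: "D \<in> comp ` (V - X)" and M: "M \<subseteq> comp ` (V - X)" by auto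
  then obtain R where R: "R \<subseteq> T \<inter> \<Union>M" "card R \<le> card M - 1" "pairwise (separated R) M"
    using insert.IH by blast
  have "R \<subseteq> V" using R(1) Union_comp_subset[OF M] by blast
  then have "finite R" using finite_V by (rule finite_subset)
  show ?case
  proof (cases "\<forall>K\<in>M. separated R D K")
    case True
    then have "pairwise (separated R) (insert D M)"
      using R(3) by (simp add: pairwise_insert separated_commute)
    moreover have "card R \<le> card (insert D M) - 1" using R(2) insert.hyps by simp
    moreover have "R \<subseteq> T \<inter> \<Union>(insert D M)" using R(1) by auto
    ultimately show ?thesis by (intro exI[of _ R] conjI)
  next
    case False
    then obtain K1 where K1: "K1 \<in> M" "\<not> separated R D K1" by blast
    obtain w where w: "w \<in> D \<inter> T" "\<forall>K\<in>M. separated (insert w R) D K"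
      using separator_insert[OF M D insert.hyps(2) _ R(3) K1] R(1) by blast
    have "pairwise (separated (insert w R)) M"
      by (rule pairwise_mono[OF R(3)]) (auto elim: separated_mono)
    then have "pairwise (separated (insert w R)) (insert D M)"
      using w(2) by (simp add: pairwise_insert separated_commute)
    moreover have "card (insert w R) \<le> card (insert D M) - 1"
    proof -
      have "card M > 0" using K1(1) insert.hyps(1) card_gt_0_iff by blast
      then have "Suc (card R) \<le> card M" using R(2) by linarith
      then show ?thesis using insert.hyps \<open>finite R\<close> by (simp add: card_insert_if)
    qed
    moreover have "insert w R \<subseteq> T \<inter> \<Union>(insert D M)" using R(1) w(1) by auto
    ultimately show ?thesis by (intro exI[of _ "insert w R"] conjI)
  qed
qed

subsection \<open>Attached components and the exchange argument\<close>

definition attached_comps :: "'v set \<Rightarrow> 'v set set" where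
  "attached_comps Z =
    {K \<in> comp ` (V - X). K \<inter> T \<noteq> {} \<and> (\<exists>z\<in>Z. \<exists>a\<in>K. \<exists>e\<in>E - S. ends e = {a, z})}"

lemma attached_comps_subset: "attached_comps Z \<subseteq> comp ` (V - X)"
  by (auto simp: attached_comps_def)

lemma finite_attached_comps: "finite (attached_comps Z)"
  using finite_subset[OF attached_comps_subset] finite_V by blast

lemma attached_comps_UN: "attached_comps Z = (\<Union>z\<in>Z. attached_comps {z})"
  unfolding attached_comps_def by auto

lemma comp_in_attached_comps:
  assumes Z: "Z \<inter> T = {}" "z \<in> Z" and e: "e \<in> E" "ends e = {a, z}" and a: "a \<in> V - X"
    and ab: "(a, b) \<in> (edge_rel (V - X) E ends)\<^sup>*" "(a, b) \<notin> (edge_rel (V - X) (E - S) ends)\<^sup>*"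
  shows "comp a \<in> attached_comps Z"
proof -
  have "e \<in> E - S" using Z e by (auto simp: verts_of_def)
  then have "\<exists>z\<in>Z. \<exists>a'\<in>comp a. \<exists>e\<in>E - S. ends e = {a', z}" using Z(2) e(2) comp_self by blast
  with comp_meets_T[OF ab] a show ?thesis by (auto simp: attached_comps_def)
qed

text \<open>Otherwise the components of \<open>a\<close> and \<open>b\<close> would be two distinct attached components that
  \<open>R\<close> fails to separate.\<close>

lemma attached_rtrancl_same_comp:
  assumes Z: "Z \<inter> T = {}" and sep: "pairwise (separated R) (attached_comps Z)"
    and a: "a \<in> V - X - R" "z1 \<in> Z" "e1 \<in> E" "ends e1 = {a, z1}"
    and b: "b \<in> V - X - R" "z2 \<in> Z" "e2 \<in> E" "ends e2 = {b, z2}"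
    and ab: "(a, b) \<in> (edge_rel (V - X - R) E ends)\<^sup>*"
  shows "(a, b) \<in> (edge_rel (V - X) (E - S) ends)\<^sup>*"
proof (rule ccontr)
  assume nab: "(a, b) \<notin> (edge_rel (V - X) (E - S) ends)\<^sup>*"
  have ab': "(a, b) \<in> (edge_rel (V - X) E ends)\<^sup>*" by (rule rtrancl_edge_rel_mono[OF ab]) auto
  have "comp a \<in> attached_comps Z"
    by (rule comp_in_attached_comps[OF Z a(2-4) _ ab' nab]) (use a(1) in blast)
  moreover have "(b, a) \<notin> (edge_rel (V - X) (E - S) ends)\<^sup>*"
    using nab rtrancl_edge_rel_sym by metis
  then have "comp b \<in> attached_comps Z"
    using comp_in_attached_comps[OF Z b(2-4) _ rtrancl_edge_rel_sym[OF ab']] b(1) by blast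
  moreover have "comp a \<noteq> comp b" using nab comp_self[of b] by (auto simp: comp_def)
  ultimately have "separated R (comp a) (comp b)" using sep by (auto simp: pairwise_def)
  then show False using ab comp_self unfolding separated_def by blast
qed

lemma exchange_no_S_cycle:
  assumes Z: "Z \<subseteq> X" "Z \<inter> T = {}" and R: "R \<subseteq> V - X"
    and sep: "pairwise (separated R) (attached_comps Z)"
  shows "\<not> (\<exists>vs es. is_S_cycle (V - (X - Z \<union> R)) (del_verts_E E ends (X - Z \<union> R)) ends S vs es)"
  unfolding ex_S_cycle_del_verts_iff
proof (intro notI, elim bexE exE conjE)
  let ?Y = "V - (X - Z \<union> R)"
  fix e u v
  assume e: "e \<in> E \<inter> S" "ends e = {u, v}" and u: "u \<in> ?Y" and v: "v \<in> ?Y"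
    and uv: "(u, v) \<in> (edge_rel ?Y (E - {e}) ends)\<^sup>*"
  have "u \<in> T" "v \<in> T" using e by (auto simp: verts_of_def)
  then have uv_in: "u \<in> V - X - R" "v \<in> V - X - R" "u \<notin> Z" "v \<notin> Z" using u v Z(2) by auto
  have Y_Z: "?Y - Z = V - X - R" using Z(1) R by auto
  let ?H = "edge_rel (V - X) (E - {e}) ends"
  have to_H: "(x, y) \<in> ?H\<^sup>*" if "(x, y) \<in> (edge_rel (V - X - R) (E - {e}) ends)\<^sup>*" for x y
    by (rule rtrancl_edge_rel_mono[OF that]) auto
  have bridge: "(u, v) \<notin> ?H\<^sup>*" using S_edge_bridge[OF e] uv_in(1,2) by blast
  from uv uv_in(3) show False
  proof (cases rule: rtrancl_edge_rel_first_entry)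
    case 1
    then show False using bridge to_H Y_Z by simp
  next
    case (2 a z1)
    obtain z2 b where z2b: "z2 \<in> Z" "(z2, b) \<in> edge_rel ?Y (E - {e}) ends" "b \<notin> Z"
        "(b, v) \<in> (edge_rel (?Y - Z) (E - {e}) ends)\<^sup>*"
      using rtrancl_edge_rel_last_exit[OF 2(5) 2(4) uv_in(4)] by blast
    obtain e1 e2 where e1: "e1 \<in> E" "ends e1 = {a, z1}" and e2: "e2 \<in> E" "ends e2 = {b, z2}"
      using 2(3) z2b(2) by (auto simp: edge_rel_def insert_commute)
    have ab_in: "a \<in> V - X - R" "b \<in> V - X - R"
      using 2(2,3) z2b(2,3) Y_Z by (auto simp: edge_rel_def)
    have ua: "(u, a) \<in> (edge_rel (V - X - R) (E - {e}) ends)\<^sup>*"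
      and bv: "(b, v) \<in> (edge_rel (V - X - R) (E - {e}) ends)\<^sup>*"
      using 2(1) z2b(4) Y_Z by simp_all
    have "(a, u) \<in> (edge_rel (V - X - R) E ends)\<^sup>*"
      by (rule rtrancl_edge_rel_mono[OF rtrancl_edge_rel_sym[OF ua]]) auto
    moreover have "(u, v) \<in> edge_rel (V - X - R) E ends" using e uv_in by (auto simp: edge_rel_def)
    moreover have "(v, b) \<in> (edge_rel (V - X - R) E ends)\<^sup>*"
      by (rule rtrancl_edge_rel_mono[OF rtrancl_edge_rel_sym[OF bv]]) auto
    ultimately have "(a, b) \<in> (edge_rel (V - X - R) E ends)\<^sup>*"
      by (meson rtrancl_into_rtrancl rtrancl_trans)
    then have "(a, b) \<in> (edge_rel (V - X) (E - S) ends)\<^sup>*"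
      using attached_rtrancl_same_comp[OF Z(2) sep ab_in(1) 2(4) e1 ab_in(2) z2b(1) e2] by blast
    then have "(a, b) \<in> ?H\<^sup>*" by (rule rtrancl_edge_rel_mono) (use e(1) in auto)
    then have "(u, v) \<in> ?H\<^sup>*" using to_H[OF ua] to_H[OF bv] by (meson rtrancl_trans)
    with bridge show False ..
  qed
qed

lemma card_attached_comps:
  assumes dom: "dominant_solution V E ends S k X" and Z: "Z \<subseteq> X - T" "Z \<noteq> {}"
  shows "card Z + 2 \<le> card (attached_comps Z)"
proof (rule ccontr)
  assume "\<not> ?thesis"
  then have few: "card (attached_comps Z) \<le> card Z + 1" by simp
  obtain R where R: "R \<subseteq> T \<inter> \<Union>(attached_comps Z)"
      "card R \<le> card (attached_comps Z) - 1" "pairwise (separated R) (attached_comps Z)"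
    using exists_separator[OF finite_attached_comps attached_comps_subset] by blast
  have RX: "R \<subseteq> V - X" using R(1) Union_comp_subset[OF attached_comps_subset] by blast
  have fin: "finite X" "finite Z" "finite R"
    using X_subset RX Z(1) finite_V by (auto intro: finite_subset)
  have card_RZ: "card R \<le> card Z" using R(2) few by linarith
  have card_ZX: "card Z \<le> card X" using Z(1) fin(1) card_mono by blast
  let ?X' = "X - Z \<union> R"
  have card_X': "card ?X' = card X - card Z + card R"
  proof -
    have "card ?X' = card (X - Z) + card R" using fin RX by (intro card_Un_disjoint) auto
    moreover have "card (X - Z) = card X - card Z" using Z(1) fin(2) card_Diff_subset by blast
    ultimately show ?thesis by simp
  qed
  have "esfvs_solution V E ends S k ?X'"
    unfolding esfvs_solution_def
  proof (intro conjI)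
    show "?X' \<subseteq> V" using X_subset RX by blast
    show "card ?X' \<le> k"
      using dom card_X' card_RZ card_ZX by (auto simp: dominant_solution_def esfvs_solution_def)
    show "\<not> (\<exists>vs es. is_S_cycle (V - ?X') (del_verts_E E ends ?X') ends S vs es)"
      by (rule exchange_no_S_cycle[OF _ _ RX R(3)]) (use Z(1) in auto)
  qed
  with dom have le: "card X \<le> card ?X'"
    and tie: "card ?X' = card X \<Longrightarrow> card (?X' \<inter> T) \<le> card (X \<inter> T)"
    unfolding dominant_solution_def by blast+
  have "card R = card Z" using le card_X' card_RZ card_ZX by linarith
  then have "card (?X' \<inter> T) \<le> card (X \<inter> T)" using tie card_X' card_ZX by simp
  moreover have "?X' \<inter> T = X \<inter> T \<union> R" using Z(1) R(1) by blast
  moreover have "card (X \<inter> T \<union> R) = card (X \<inter> T) + card R"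
    using fin RX by (intro card_Un_disjoint) auto
  moreover have "card Z > 0" using Z(2) fin(2) by (simp add: card_gt_0_iff)
  ultimately show False using \<open>card R = card Z\<close> by simp
qed

lemma branch_path:
  assumes z: "z \<in> X" and K: "K \<in> attached_comps {z}"
  shows "\<exists>p. is_path V (E - S) ends p \<and> hd p \<in> T \<and> last p = z \<and> set p \<subseteq> insert z K"
proof -
  obtain u t a e where u: "u \<in> V - X" "K = comp u" and t: "t \<in> K" "t \<in> T"
      and a: "a \<in> K" and e: "e \<in> E - S" "ends e = {a, z}"
    using K by (auto simp: attached_comps_def)
  have K_eq: "comp v = K" if "v \<in> K" for v using that u(2) comp_eq by simp
  have "(t, a) \<in> (edge_rel (V - X) (E - S) ends)\<^sup>*" using comp_rtrancl t(1) a u(2) by simp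
  moreover have "t \<in> V - X" using t(1) u comp_subset by blast
  ultimately obtain q where q: "is_path (V - X) (E - S) ends q" "hd q = t" "last q = a"
    by (blast dest: rtrancl_imp_path)
  have q_K: "set q \<subseteq> K"
  proof
    fix v assume "v \<in> set q"
    then have "v \<in> comp t" using path_rtrancl[OF q(1)] q(2) by (simp add: comp_def)
    then show "v \<in> K" using K_eq[OF t(1)] by simp
  qed
  have "K \<subseteq> V - X" using u comp_subset by simp
  moreover have "is_path V (E - S) ends q" using q(1) by (rule path_mono_verts) blast
  ultimately have "is_path V (E - S) ends (q @ [z])"
    using q_K q(3) e z X_subset by (intro path_snoc) auto
  moreover have "hd (q @ [z]) = t" using q(1,2) by (cases q) (auto simp: is_path_def)
  ultimately show ?thesis using t(2) q_K by (intro exI[of _ "q @ [z]"]) auto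
qed

lemma hall_condition_attached_comps:
  fixes J :: "nat set" and ow :: "nat \<Rightarrow> 'v"
  assumes dom: "dominant_solution V E ends S k X" and J: "finite J" "ow ` J \<subseteq> X - T"
    and ow: "\<forall>i\<in>J. \<forall>j\<in>J. i \<noteq> j \<and> (3 \<le> i \<or> 3 \<le> j) \<longrightarrow> ow i \<noteq> ow j"
  shows "card J \<le> card (\<Union>i\<in>J. attached_comps {ow i})"
proof (cases "J = {}")
  case False
  have "card J \<le> card (ow ` J) + 2" using J(1) ow by (rule card_le_card_image_add_2)
  also have "\<dots> \<le> card (attached_comps (ow ` J))"
    by (rule card_attached_comps[OF dom J(2)]) (use False in simp)
  also have "attached_comps (ow ` J) = (\<Union>i\<in>J. attached_comps {ow i})"
    by (subst attached_comps_UN) simp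
  finally show ?thesis .
qed simp

lemma comps_disjoint_if_inj_on:
  assumes "\<forall>i\<in>I. f i \<in> comp ` (V - X)" "inj_on f I" "i \<in> I" "j \<in> I" "i \<noteq> j"
  shows "f i \<inter> f j = {}"
proof -
  obtain u w where "f i = comp u" "f j = comp w" using assms(1,3,4) by blast
  moreover have "f i \<noteq> f j" using assms(2-5) inj_onD by metis
  ultimately show ?thesis using comp_disjoint by simp
qed

lemma branches:
  fixes N :: nat and ow :: "nat \<Rightarrow> 'v"
  assumes dom: "dominant_solution V E ends S k X"
    and ow: "\<forall>i<N. ow i \<in> X" "\<forall>i<N. \<forall>j<N. i \<noteq> j \<and> (3 \<le> i \<or> 3 \<le> j) \<longrightarrow> ow i \<noteq> ow j"
  obtains B P where
    "\<forall>i<N. B i = {} \<or> B i \<in> comp ` (V - X)" "\<forall>i<N. \<forall>j<N. i \<noteq> j \<longrightarrow> B i \<inter> B j = {}"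
    "\<forall>i<N. is_path V (E - S) ends (P i) \<and> hd (P i) \<in> T \<and> last (P i) = ow i \<and>
        set (P i) \<subseteq> insert (ow i) (B i)"
proof -
  define I where "I = {i. i < N \<and> ow i \<notin> T}"
  have fin_I: "finite I" unfolding I_def by (rule finite_subset[of _ "{..<N}"]) auto
  have "\<forall>J\<subseteq>I. card J \<le> card (\<Union>((\<lambda>i. attached_comps {ow i}) ` J))"
  proof (intro allI impI)
    fix J assume J: "J \<subseteq> I"
    have "finite J" using J fin_I by (rule finite_subset)
    moreover have "ow ` J \<subseteq> X - T" using J ow(1) by (auto simp: I_def)
    moreover have "\<forall>i\<in>J. \<forall>j\<in>J. i \<noteq> j \<and> (3 \<le> i \<or> 3 \<le> j) \<longrightarrow> ow i \<noteq> ow j"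
      using J ow(2) by (auto simp: I_def)
    ultimately show "card J \<le> card (\<Union>((\<lambda>i. attached_comps {ow i}) ` J))"
      by (rule hall_condition_attached_comps[OF dom])
  qed
  moreover have "\<forall>i\<in>I. finite (attached_comps {ow i})" using finite_attached_comps by blast
  ultimately obtain f where f: "\<forall>i\<in>I. f i \<in> attached_comps {ow i}" "inj_on f I"
    using hall_marriage[OF fin_I, of "\<lambda>i. attached_comps {ow i}"] by auto
  define B where "B i = (if i \<in> I then f i else {})" for i
  have f_comp: "\<forall>i\<in>I. f i \<in> comp ` (V - X)" using f(1) attached_comps_subset by blast
  then have "\<forall>i<N. B i = {} \<or> B i \<in> comp ` (V - X)" by (simp add: B_def)
  moreover have "\<forall>i<N. \<forall>j<N. i \<noteq> j \<longrightarrow> B i \<inter> B j = {}"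
    using comps_disjoint_if_inj_on[OF f_comp f(2)] by (simp add: B_def)
  moreover have "\<forall>i<N. \<exists>p. is_path V (E - S) ends p \<and> hd p \<in> T \<and> last p = ow i \<and>
      set p \<subseteq> insert (ow i) (B i)"
  proof (intro allI impI)
    fix i assume i: "i < N"
    show "\<exists>p. is_path V (E - S) ends p \<and> hd p \<in> T \<and> last p = ow i \<and> set p \<subseteq> insert (ow i) (B i)"
    proof (cases "i \<in> I")
      case True
      then show ?thesis using branch_path ow(1) f(1) i by (simp add: B_def)
    next
      case False
      then have "ow i \<in> T" "ow i \<in> V" using i ow(1) X_subset by (auto simp: I_def)
      then show ?thesis by (intro exI[of _ "[ow i]"]) (simp add: is_path_def)
    qed
  qed
  then obtain P where "\<forall>i<N. is_path V (E - S) ends (P i) \<and> hd (P i) \<in> T \<and> last (P i) = ow i \<and>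
      set (P i) \<subseteq> insert (ow i) (B i)"
    by metis
  ultimately show thesis by (rule that)
qed

lemma branch_meets_comp:
  assumes "B = {} \<or> B \<in> comp ` (V - X)" "z \<in> X" "set p \<subseteq> insert z B"
    and "C \<in> comp ` (V - X)" "set p \<inter> C \<noteq> {}"
  shows "B = C"
proof -
  have "C \<inter> X = {}" using assms(4) comp_subset by blast
  then have "B \<inter> C \<noteq> {}" using assms(2,3,5) by blast
  moreover obtain w where "B = comp w" using assms(1) calculation by auto
  moreover obtain u where "C = comp u" using assms(4) by blast
  ultimately show ?thesis using comp_disjoint by blast
qed

lemma linkage_of_branches:
  fixes N :: nat and ow :: "nat \<Rightarrow> 'v" and P :: "nat \<Rightarrow> 'v list"
  assumes N: "3 \<le> N"
    and ow: "\<forall>i<N. ow i \<in> X" "\<forall>i<3. ow i = x"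
      "\<forall>i<N. \<forall>j<N. i \<noteq> j \<and> (3 \<le> i \<or> 3 \<le> j) \<longrightarrow> ow i \<noteq> ow j"
    and B: "\<forall>i<N. B i = {} \<or> B i \<in> comp ` (V - X)" "\<forall>i<N. \<forall>j<N. i \<noteq> j \<longrightarrow> B i \<inter> B j = {}"
    and P: "\<forall>i<N. is_path V (E - S) ends (P i) \<and> hd (P i) \<in> T \<and> last (P i) = ow i \<and>
        set (P i) \<subseteq> insert (ow i) (B i)"
  shows "(\<forall>i < N. is_path V (E - S) ends (P i) \<and> hd (P i) \<in> T \<and> last (P i) \<in> X) \<and>
     (\<forall>i < 3. last (P i) = x) \<and>
     (\<forall>i < 3. \<forall>j < 3. i \<noteq> j \<longrightarrow> set (P i) \<inter> set (P j) = {x}) \<and>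
     (\<forall>i < N. \<forall>j < N. i \<noteq> j \<and> (3 \<le> i \<or> 3 \<le> j) \<longrightarrow> set (P i) \<inter> set (P j) = {}) \<and>
     (\<forall>C \<in> components (V - X) (del_verts_E (E - S) ends X) ends. \<forall>i < N. \<forall>j < N.
        set (P i) \<inter> C \<noteq> {} \<longrightarrow> set (P j) \<inter> C \<noteq> {} \<longrightarrow> i = j)"
proof (intro conjI)
  have B_X: "B i \<inter> X = {}" if "i < N" for i using B(1) that comp_subset by blast
  have ow_in: "ow i \<in> set (P i)" if "i < N" for i
    using P that by (metis is_path_def last_in_set)
  show "\<forall>i < N. is_path V (E - S) ends (P i) \<and> hd (P i) \<in> T \<and> last (P i) \<in> X"
    using P ow(1) by simp
  show "\<forall>i < 3. last (P i) = x" using P ow(2) N by simp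
  show "\<forall>i < 3. \<forall>j < 3. i \<noteq> j \<longrightarrow> set (P i) \<inter> set (P j) = {x}"
  proof (intro allI impI)
    fix i j :: nat assume "i < 3" "j < 3" "i \<noteq> j"
    with N have ij: "i < N" "j < N" "ow i = x" "ow j = x" using ow(2) by auto
    then have "set (P i) \<subseteq> insert x (B i)" "set (P j) \<subseteq> insert x (B j)"
      "B i \<inter> B j = {}" "x \<notin> B i"
      using P B(2) B_X[of i] ow(1) \<open>i \<noteq> j\<close> by auto
    moreover have "x \<in> set (P i)" "x \<in> set (P j)" using ow_in ij by metis+
    ultimately show "set (P i) \<inter> set (P j) = {x}" by blast
  qed
  show "\<forall>i < N. \<forall>j < N. i \<noteq> j \<and> (3 \<le> i \<or> 3 \<le> j) \<longrightarrow> set (P i) \<inter> set (P j) = {}"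
  proof (intro allI impI)
    fix i j assume ij: "i < N" "j < N" "i \<noteq> j \<and> (3 \<le> i \<or> 3 \<le> j)"
    then have "ow i \<noteq> ow j" using ow(3) by blast
    moreover have "set (P i) \<subseteq> insert (ow i) (B i)" "set (P j) \<subseteq> insert (ow j) (B j)"
      "ow i \<in> X" "ow j \<in> X" "B i \<inter> B j = {}"
      using P ow(1) B(2) ij by auto
    ultimately show "set (P i) \<inter> set (P j) = {}" using B_X[OF ij(1)] B_X[OF ij(2)] by blast
  qed
  show "\<forall>C \<in> components (V - X) (del_verts_E (E - S) ends X) ends. \<forall>i < N. \<forall>j < N.
      set (P i) \<inter> C \<noteq> {} \<longrightarrow> set (P j) \<inter> C \<noteq> {} \<longrightarrow> i = j"
  proof (intro ballI allI impI)
    fix C i j assume C: "C \<in> components (V - X) (del_verts_E (E - S) ends X) ends"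
      and ij: "i < N" "j < N" and hit: "set (P i) \<inter> C \<noteq> {}" "set (P j) \<inter> C \<noteq> {}"
    have "C \<in> comp ` (V - X)" using C components_eq_comp by simp
    then have "B l = C" if "l < N" "set (P l) \<inter> C \<noteq> {}" for l
      using branch_meets_comp[of "B l" "ow l" "P l" C] B(1) P ow(1) that by simp
    then have "B i = C" "B j = C" "C \<noteq> {}" using ij hit by auto
    then show "i = j" using B(2) ij by auto
  qed
qed

end

theorem lemma4:
  fixes V :: "'v set" and E :: "'e set" and ends :: "'e \<Rightarrow> 'v set"
    and S :: "'e set" and k :: nat and X :: "'v set" and x :: 'v
  assumes G: "multigraph V E ends"
    and SE: "S \<subseteq> E"
    and dom: "dominant_solution V E ends S k X"
    and xX: "x \<in> X - verts_of ends S"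
  shows "\<exists>P :: nat \<Rightarrow> 'v list.
     (\<forall>i < card X + 2. is_path V (E - S) ends (P i) \<and>
                         hd (P i) \<in> verts_of ends S \<and> last (P i) \<in> X) \<and>
     (\<forall>i < 3. last (P i) = x) \<and>
     (\<forall>i < 3. \<forall>j < 3. i \<noteq> j \<longrightarrow> set (P i) \<inter> set (P j) = {x}) \<and>
     (\<forall>i < card X + 2. \<forall>j < card X + 2. i \<noteq> j \<and> (3 \<le> i \<or> 3 \<le> j) \<longrightarrow>
          set (P i) \<inter> set (P j) = {}) \<and>
     (\<forall>C \<in> components (V - X) (del_verts_E (E - S) ends X) ends.
        \<forall>i < card X + 2. \<forall>j < card X + 2.
          set (P i) \<inter> C \<noteq> {} \<longrightarrow> set (P j) \<inter> C \<noteq> {} \<longrightarrow> i = j)"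
proof -
  have sol: "esfvs_solution V E ends S k X" using dom by (simp add: dominant_solution_def)
  interpret S_cycle_hitting V E ends S X
    using G sol by unfold_locales (auto simp: esfvs_solution_def)
  have "finite X" using X_subset finite_V by (rule finite_subset)
  then have "0 < card X" using xX card_gt_0_iff by blast
  then have N: "3 \<le> card X + 2" by simp
  obtain ow where ow: "\<forall>i<card X + 2. ow i \<in> X" "\<forall>i<3. ow i = x"
      "\<forall>i<card X + 2. \<forall>j<card X + 2. i \<noteq> j \<and> (3 \<le> i \<or> 3 \<le> j) \<longrightarrow> ow i \<noteq> ow j"
    using triple_numbering[OF \<open>finite X\<close>] xX by blast
  obtain B P where
    "\<forall>i<card X + 2. B i = {} \<or> B i \<in> comp ` (V - X)"
    "\<forall>i<card X + 2. \<forall>j<card X + 2. i \<noteq> j \<longrightarrow> B i \<inter> B j = {}"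
    "\<forall>i<card X + 2. is_path V (E - S) ends (P i) \<and> hd (P i) \<in> T \<and> last (P i) = ow i \<and>
        set (P i) \<subseteq> insert (ow i) (B i)"
    using branches[OF dom ow(1,3)] by metis
  then show ?thesis by (intro exI[of _ P]) (rule linkage_of_branches[OF N ow])
qed

end
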